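(* The conditional logics $\mathsf{CEC}$ and $\mathsf{CECN}$ do not have Craig interpolation; consequently they have neither UIP nor ULIP.
   Context: Formulas of $\mathcal{L}_\triangleright$: atoms, $\bot$, $\wedge,\vee,\to$, binary $\triangleright$; $\top:=\bot\to\bot$; $V(\phi)$ is the set of atoms occurring in $\phi$. $\mathsf{CE}$ is the smallest set of formulas containing all instances of classical tautologies and closed under modus ponens and the rule: from $\phi_0\leftrightarrow\phi_1$ and $\psi_0\leftrightarrow\psi_1$ infer $(\phi_0\triangleright\psi_0)\to(\phi_1\triangleright\psi_1)$. $\mathsf{CEC}=\mathsf{CE}$ plus all instances of (CC) $(\phi\triangleright\psi)\wedge(\phi\triangleright\theta)\to(\phi\triangleright\psi\wedge\theta)$; $\mathsf{CECN}=\mathsf{CEC}$ plus (CN) $\phi\triangleright\top$. CIP for a logic $L$: whenever $L\vdash\phi\to\psi$ there is $\theta$ with $V(\theta)\subseteq V(\phi)\cap V(\psi)$, $L\vdash\phi\to\theta$ and $L\vdash\theta\to\psi$. (UIP and ULIP are the uniform and uniform Lyndon interpolation properties, both of which imply CIP.) *)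

theory Defs
  imports Main
begin

datatype fm =
    Atom nat
  | Bot
  | And fm fm
  | Or fm fm
  | Imp fm fm
  | Cond fm fm

definition Top :: fm where "Top = Imp Bot Bot"

definition Iff :: "fm \<Rightarrow> fm \<Rightarrow> fm" where
  "Iff a b = And (Imp a b) (Imp b a)"

fun V :: "fm \<Rightarrow> nat set" where
  "V (Atom p) = {p}"
| "V Bot = {}"
| "V (And a b) = V a \<union> V b"
| "V (Or a b) = V a \<union> V b"
| "V (Imp a b) = V a \<union> V b"
| "V (Cond a b) = V a \<union> V b"

text \<open>Positive / negative atom occurrences (polarity); both arguments of the
  non-monotone operator are counted with both polarities.\<close>
fun Vpos :: "fm \<Rightarrow> nat set" and Vneg :: "fm \<Rightarrow> nat set" where
  "Vpos (Atom p) = {p}"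
| "Vpos Bot = {}"
| "Vpos (And a b) = Vpos a \<union> Vpos b"
| "Vpos (Or a b) = Vpos a \<union> Vpos b"
| "Vpos (Imp a b) = Vneg a \<union> Vpos b"
| "Vpos (Cond a b) = V a \<union> V b"
| "Vneg (Atom p) = {}"
| "Vneg Bot = {}"
| "Vneg (And a b) = Vneg a \<union> Vneg b"
| "Vneg (Or a b) = Vneg a \<union> Vneg b"
| "Vneg (Imp a b) = Vpos a \<union> Vneg b"
| "Vneg (Cond a b) = V a \<union> V b"

text \<open>A formula is an instance of a classical tautology iff it is true under
  every Boolean valuation that treats atoms and conditional formulas as
  propositional letters.\<close>
fun peval :: "(fm \<Rightarrow> bool) \<Rightarrow> fm \<Rightarrow> bool" where
  "peval v (Atom p) = v (Atom p)"
| "peval v Bot = False"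
| "peval v (And a b) = (peval v a \<and> peval v b)"
| "peval v (Or a b) = (peval v a \<or> peval v b)"
| "peval v (Imp a b) = (peval v a \<longrightarrow> peval v b)"
| "peval v (Cond a b) = v (Cond a b)"

definition taut :: "fm \<Rightarrow> bool" where
  "taut a = (\<forall>v. peval v a)"

inductive deriv :: "fm set \<Rightarrow> fm \<Rightarrow> bool" for Ax :: "fm set" where
  tautI: "taut a \<Longrightarrow> deriv Ax a"
| axI: "a \<in> Ax \<Longrightarrow> deriv Ax a"
| mp: "deriv Ax (Imp a b) \<Longrightarrow> deriv Ax a \<Longrightarrow> deriv Ax b"
| re: "deriv Ax (Iff a0 a1) \<Longrightarrow> deriv Ax (Iff b0 b1) \<Longrightarrow>
       deriv Ax (Imp (Cond a0 b0) (Cond a1 b1))"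

definition CC_ax :: "fm set" where
  "CC_ax = {Imp (And (Cond a b) (Cond a c)) (Cond a (And b c)) | a b c. True}"

definition CN_ax :: "fm set" where
  "CN_ax = {Cond a Top | a. True}"

definition CE :: "fm \<Rightarrow> bool" where "CE = deriv {}"
definition CEC :: "fm \<Rightarrow> bool" where "CEC = deriv CC_ax"
definition CECN :: "fm \<Rightarrow> bool" where "CECN = deriv (CC_ax \<union> CN_ax)"

definition CIP :: "(fm \<Rightarrow> bool) \<Rightarrow> bool" where
  "CIP L = (\<forall>a b. L (Imp a b) \<longrightarrow>
     (\<exists>c. V c \<subseteq> V a \<inter> V b \<and> L (Imp a c) \<and> L (Imp c b)))"

definition UIP :: "(fm \<Rightarrow> bool) \<Rightarrow> bool" where
  "UIP L = (\<forall>a p. \<exists>e u.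
     V e \<subseteq> V a - {p} \<and> V u \<subseteq> V a - {p} \<and>
     L (Imp a e) \<and> L (Imp u a) \<and>
     (\<forall>b. p \<notin> V b \<longrightarrow> L (Imp a b) \<longrightarrow> L (Imp e b)) \<and>
     (\<forall>b. p \<notin> V b \<longrightarrow> L (Imp b a) \<longrightarrow> L (Imp b u)))"

definition Vpol :: "bool \<Rightarrow> fm \<Rightarrow> nat set" where
  "Vpol pol a = (if pol then Vpos a else Vneg a)"

definition ULIP :: "(fm \<Rightarrow> bool) \<Rightarrow> bool" where
  "ULIP L = (\<forall>a p pol. \<exists>e u.
     (\<forall>q. Vpol q e \<subseteq> Vpol q a \<and> Vpol q u \<subseteq> Vpol q a) \<and>
     p \<notin> Vpol pol e \<and> p \<notin> Vpol pol u \<and>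
     L (Imp a e) \<and> L (Imp u a) \<and>
     (\<forall>b. p \<notin> Vpol pol b \<longrightarrow> L (Imp a b) \<longrightarrow> L (Imp e b)) \<and>
     (\<forall>b. p \<notin> Vpol pol b \<longrightarrow> L (Imp b a) \<longrightarrow> L (Imp b u)))"

end

theory Submission
  imports Defs
begin

text \<open>Consider neighbourhood models on the worlds nat in which all worlds share one
  neighbourhood system N, so a conditional holds everywhere or nowhere according as the truth
  set of its consequent lies in N. They validate CE, validate CC when N is closed under
  intersection, and CN when UNIV \<in> N. By CC and RE, phi = \<bottom> \<triangleright> (p0 \<and> p1) implies
  psi = (\<bottom> \<triangleright> (\<not>p1 \<and> p2)) \<rightarrow> (\<bottom> \<triangleright> \<bottom>), the two consequents being inconsistent;
  an interpolant, and a uniform interpolant of phi eliminating p0, mentions only p1.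
  In the first model p0, p1 are true at {0} and {0,1} and N = {{0}, UNIV}, so phi is valid;
  in the second p1, p2 are true at {0,1} and {2} and N = {{2}, UNIV}, so psi fails everywhere.
  A formula in p1 alone has a truth set made of the blocks {0,1} and {2,3,...}, hence never
  {0} or {2}, so it has the same truth set in both models: valid in the first, it would be valid
  in the second, where it implies psi.\<close>

fun truth :: "(nat \<Rightarrow> nat set) \<Rightarrow> nat set set \<Rightarrow> fm \<Rightarrow> nat set" where
  "truth val N (Atom n) = val n"
| "truth val N Bot = {}"
| "truth val N (And a b) = truth val N a \<inter> truth val N b"
| "truth val N (Or a b) = truth val N a \<union> truth val N b"
| "truth val N (Imp a b) = - truth val N a \<union> truth val N b"
| "truth val N (Cond a b) = (if truth val N b \<in> N then UNIV else {})"

lemma peval_truth: "peval (\<lambda>f. w \<in> truth val N f) a = (w \<in> truth val N a)"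
  by (induction a) auto

lemma deriv_truth_UNIV:
  assumes "deriv Ax a" and "\<And>x. x \<in> Ax \<Longrightarrow> truth val N x = UNIV"
  shows "truth val N a = UNIV"
  using assms
proof (induction rule: deriv.induct)
  case (tautI a)
  then show ?case using peval_truth[of _ val N a] by (auto simp: taut_def)
next
  case (re a0 a1 b0 b1)
  then have "truth val N b0 = truth val N b1" by (auto simp: Iff_def)
  then show ?case by simp
qed auto

lemma CC_CN_ax_truth_UNIV:
  assumes "\<And>X Y. X \<in> N \<Longrightarrow> Y \<in> N \<Longrightarrow> X \<inter> Y \<in> N" and "UNIV \<in> N"
    and "x \<in> CC_ax \<union> CN_ax"
  shows "truth val N x = UNIV"
  using assms by (auto simp: CC_ax_def CN_ax_def Top_def)

lemma deriv_imp_trans: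
  assumes "deriv Ax (Imp a b)" and "deriv Ax (Imp b c)"
  shows "deriv Ax (Imp a c)"
proof -
  have "taut (Imp (Imp a b) (Imp (Imp b c) (Imp a c)))" by (simp add: taut_def)
  then show ?thesis using assms by (meson deriv.tautI deriv.mp)
qed

lemma V_eq_Vpos_Un_Vneg: "V a = Vpos a \<union> Vneg a"
  by (induction a) auto

definition phi :: fm where "phi = Cond Bot (And (Atom 0) (Atom 1))"
definition chi :: fm where "chi = Cond Bot (And (Imp (Atom 1) Bot) (Atom 2))"
definition psi :: fm where "psi = Imp chi (Cond Bot Bot)"

lemma V_phi: "V phi = {0, 1}"
  by (auto simp: phi_def)

lemma V_psi: "V psi = {1, 2}"
  by (auto simp: psi_def chi_def)

lemma deriv_phi_imp_psi:
  assumes "CC_ax \<subseteq> Ax"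
  shows "deriv Ax (Imp phi psi)"
proof -
  let ?conj = "And (And (Atom 0) (Atom 1)) (And (Imp (Atom 1) Bot) (Atom 2))"
  have cc: "deriv Ax (Imp (And phi chi) (Cond Bot ?conj))"
    using assms by (intro deriv.axI) (auto simp: CC_ax_def phi_def chi_def)
  have "deriv Ax (Iff Bot Bot)" and "deriv Ax (Iff ?conj Bot)"
    by (auto intro!: deriv.tautI simp: taut_def Iff_def)
  then have re: "deriv Ax (Imp (Cond Bot ?conj) (Cond Bot Bot))"
    by (rule deriv.re)
  have "taut (Imp (Imp (And phi chi) (Cond Bot ?conj))
                  (Imp (Imp (Cond Bot ?conj) (Cond Bot Bot)) (Imp phi psi)))"
    by (auto simp: taut_def psi_def)
  then show ?thesis using cc re by (meson deriv.tautI deriv.mp)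
qed

definition val1 :: "nat \<Rightarrow> nat set" where
  "val1 n = (if n = 0 then {0} else if n = 1 then {0, 1} else {})"
definition N1 :: "nat set set" where "N1 = {{0}, UNIV}"

definition val2 :: "nat \<Rightarrow> nat set" where
  "val2 n = (if n = 2 then {2} else if n = 1 then {0, 1} else {})"
definition N2 :: "nat set set" where "N2 = {{2}, UNIV}"

definition respects_blocks :: "nat set \<Rightarrow> bool" where
  "respects_blocks X \<longleftrightarrow> (0 \<in> X \<longleftrightarrow> 1 \<in> X) \<and> (\<forall>x\<ge>2. x \<in> X \<longleftrightarrow> 2 \<in> X)"

lemma respects_blocks_mem_N1_iff:
  assumes "respects_blocks X"
  shows "X \<in> N1 \<longleftrightarrow> X = UNIV"
  using assms by (auto simp: N1_def respects_blocks_def)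

lemma respects_blocks_mem_N2_iff:
  assumes "respects_blocks X"
  shows "X \<in> N2 \<longleftrightarrow> X = UNIV"
proof -
  have "\<not> respects_blocks {2}"
    unfolding respects_blocks_def by (auto intro: exI[of _ 3])
  then show ?thesis using assms by (auto simp: N2_def)
qed

lemma truth_formula_in_atom1:
  assumes "V c \<subseteq> {1}"
  shows "truth val1 N1 c = truth val2 N2 c \<and> respects_blocks (truth val1 N1 c)"
  using assms
proof (induction c)
  case (Cond c1 c2)
  then have eq: "truth val1 N1 c2 = truth val2 N2 c2"
    and blocks: "respects_blocks (truth val1 N1 c2)"
    by auto
  then show ?case
    using respects_blocks_mem_N1_iff[OF blocks] respects_blocks_mem_N2_iff[OF blocks[unfolded eq]]
    by (simp add: respects_blocks_def)
qed (simp_all add: val1_def val2_def respects_blocks_def, blast+)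

lemma no_interpolant_in_atom1:
  assumes "Ax \<subseteq> CC_ax \<union> CN_ax" and "V c \<subseteq> {1}"
    and "deriv Ax (Imp phi c)" and "deriv Ax (Imp c psi)"
  shows False
proof -
  have valid1: "truth val1 N1 x = UNIV" if "x \<in> Ax" for x
    using that assms(1) by (intro CC_CN_ax_truth_UNIV) (auto simp: N1_def)
  have valid2: "truth val2 N2 x = UNIV" if "x \<in> Ax" for x
    using that assms(1) by (intro CC_CN_ax_truth_UNIV) (auto simp: N2_def)
  have "truth val1 N1 phi = UNIV"
    by (auto simp: phi_def N1_def val1_def)
  then have "truth val1 N1 c = UNIV"
    using deriv_truth_UNIV[OF assms(3) valid1] by auto
  then have "truth val2 N2 c = UNIV"
    using truth_formula_in_atom1[OF assms(2)] by simp
  then have "truth val2 N2 psi = UNIV"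
    using deriv_truth_UNIV[OF assms(4) valid2] by auto
  moreover have "truth val2 N2 psi = {}"
    by (auto simp: psi_def chi_def N2_def val2_def)
  ultimately show False by simp
qed

lemma not_CIP:
  assumes "CC_ax \<subseteq> Ax" and "Ax \<subseteq> CC_ax \<union> CN_ax"
  shows "\<not> CIP (deriv Ax)"
proof
  assume "CIP (deriv Ax)"
  then obtain c where "V c \<subseteq> V phi \<inter> V psi" "deriv Ax (Imp phi c)" "deriv Ax (Imp c psi)"
    using deriv_phi_imp_psi[OF assms(1)] unfolding CIP_def by blast
  then show False
    using no_interpolant_in_atom1[OF assms(2)] by (auto simp: V_phi V_psi)
qed

definition uniform_post_interpolant :: "(fm \<Rightarrow> bool) \<Rightarrow> fm \<Rightarrow> nat \<Rightarrow> fm \<Rightarrow> bool" where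
  "uniform_post_interpolant L a p e \<longleftrightarrow>
     V e \<subseteq> V a - {p} \<and> L (Imp a e) \<and> (\<forall>b. p \<notin> V b \<longrightarrow> L (Imp a b) \<longrightarrow> L (Imp e b))"

lemma UIP_imp_uniform_post_interpolant:
  assumes "UIP L"
  shows "\<exists>e. uniform_post_interpolant L a p e"
  using assms unfolding UIP_def uniform_post_interpolant_def by blast

text \<open>Eliminating p first positively and then negatively removes it altogether.\<close>
lemma ULIP_imp_uniform_post_interpolant:
  assumes "ULIP (deriv Ax)"
  shows "\<exists>e. uniform_post_interpolant (deriv Ax) a p e"
proof -
  have elim_one_polarity: "\<exists>e. Vpos e \<subseteq> Vpos c \<and> Vneg e \<subseteq> Vneg c \<and> p \<notin> Vpol pol e \<and>
      deriv Ax (Imp c e) \<and> (\<forall>b. p \<notin> Vpol pol b \<longrightarrow> deriv Ax (Imp c b) \<longrightarrow> deriv Ax (Imp e b))"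
    for c pol
  proof -
    obtain e u where "\<forall>q. Vpol q e \<subseteq> Vpol q c \<and> Vpol q u \<subseteq> Vpol q c" "p \<notin> Vpol pol e"
        "deriv Ax (Imp c e)" "\<forall>b. p \<notin> Vpol pol b \<longrightarrow> deriv Ax (Imp c b) \<longrightarrow> deriv Ax (Imp e b)"
      using assms unfolding ULIP_def by blast
    then show ?thesis by (metis Vpol_def)
  qed
  obtain e1 where e1: "Vpos e1 \<subseteq> Vpos a" "Vneg e1 \<subseteq> Vneg a" "p \<notin> Vpos e1"
      "deriv Ax (Imp a e1)"
      "\<And>b. p \<notin> Vpos b \<Longrightarrow> deriv Ax (Imp a b) \<Longrightarrow> deriv Ax (Imp e1 b)"
    using elim_one_polarity[of a True] by (auto simp: Vpol_def)
  obtain e2 where e2: "Vpos e2 \<subseteq> Vpos e1" "Vneg e2 \<subseteq> Vneg e1" "p \<notin> Vneg e2"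
      "deriv Ax (Imp e1 e2)"
      "\<And>b. p \<notin> Vneg b \<Longrightarrow> deriv Ax (Imp e1 b) \<Longrightarrow> deriv Ax (Imp e2 b)"
    using elim_one_polarity[of e1 False] by (auto simp: Vpol_def)
  have "V e2 \<subseteq> V a - {p}"
    using e1(1-3) e2(1-3) by (auto simp: V_eq_Vpos_Un_Vneg)
  moreover have "deriv Ax (Imp a e2)"
    using e1(4) e2(4) by (rule deriv_imp_trans)
  moreover have "deriv Ax (Imp e2 b)" if "p \<notin> V b" "deriv Ax (Imp a b)" for b
    using that e1(5) e2(5) by (simp add: V_eq_Vpos_Un_Vneg)
  ultimately show ?thesis
    unfolding uniform_post_interpolant_def by blast
qed

lemma no_uniform_post_interpolant:
  assumes "CC_ax \<subseteq> Ax" and "Ax \<subseteq> CC_ax \<union> CN_ax"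
  shows "\<not> uniform_post_interpolant (deriv Ax) phi 0 e"
proof
  assume e: "uniform_post_interpolant (deriv Ax) phi 0 e"
  then have "deriv Ax (Imp e psi)"
    using deriv_phi_imp_psi[OF assms(1)] by (auto simp: uniform_post_interpolant_def V_psi)
  moreover have "V e \<subseteq> {1}" and "deriv Ax (Imp phi e)"
    using e by (auto simp: uniform_post_interpolant_def V_phi)
  ultimately show False
    using no_interpolant_in_atom1[OF assms(2)] by blast
qed

lemma interpolation_fails:
  assumes "CC_ax \<subseteq> Ax" and "Ax \<subseteq> CC_ax \<union> CN_ax"
  shows "\<not> CIP (deriv Ax) \<and> \<not> UIP (deriv Ax) \<and> \<not> ULIP (deriv Ax)"
proof (intro conjI)
  show "\<not> CIP (deriv Ax)"
    using assms by (rule not_CIP)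
  show "\<not> UIP (deriv Ax)"
    using UIP_imp_uniform_post_interpolant[of _ phi 0] no_uniform_post_interpolant[OF assms] by blast
  show "\<not> ULIP (deriv Ax)"
    using ULIP_imp_uniform_post_interpolant[of _ phi 0] no_uniform_post_interpolant[OF assms] by blast
qed

theorem mainTheorem12:
  shows "\<not> CIP CEC \<and> \<not> CIP CECN \<and> \<not> UIP CEC \<and> \<not> UIP CECN \<and>
         \<not> ULIP CEC \<and> \<not> ULIP CECN"
  using interpolation_fails[of CC_ax] interpolation_fails[of "CC_ax \<union> CN_ax"]
  unfolding CEC_def CECN_def by auto

end
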